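(* Let $S\colon\{0,1\}^n\to\{0,1\}^n$ be a polynomial-size circuit that is a YES instance of \textsc{Succinct Graph Reachability}, and let $V$, $\mathrm{Enc}$, $\ell=\ell(n)$, $p=p(n)$, $\sigma^{\mathsf{start}}$, $\sigma^{\mathsf{goal}}$ be as described in the context. Then there exists a reconfiguration sequence $\sigma$ from $\sigma^{\mathsf{start}}$ to $\sigma^{\mathsf{goal}}$ over $\{0,1,\bot\}^{2\ell(n)+p(n)}$ such that $V(S)$ accepts every proof in $\sigma$ with probability $1$.
   Context: \textsc{Succinct Graph Reachability}: given a polynomial-size circuit $S\colon\{0,1\}^n\to\{0,1\}^n$ with $S(1^n)=1^n$, decide whether there is a sequence $(\alpha^{(1)},\ldots,\alpha^{(T)})$ in $\{0,1\}^n$ from $0^n$ to $1^n$ such that for all $t<T$: $\alpha^{(t)}=\alpha^{(t+1)}$ or $S(\alpha^{(t)})=\alpha^{(t+1)}$ or $S(\alpha^{(t+1)})=\alpha^{(t)}$; YES instances are those where such a sequence exists. For strings $f,g$ of equal length, $\Delta(f,g)$ is the fraction of positions where they differ; for a set $A$, $\Delta(f,A)=\min_{g\in A}\Delta(f,g)$; $f$ is $\epsilon$-close to $A$ if $\Delta(f,A)\le\epsilon$ and $\epsilon$-far otherwise. $\bot$ is a symbol distinct from $0,1$; $\circ$ denotes concatenation; $f|_I$ denotes the restriction of $f$ to positions $I$. Setting: $\mathrm{Enc}\colon\{0,1\}^n\to\{0,1\}^{\ell(n)}$, $\ell(n)=n^{1+o(1)}$, is an error-correcting code with relative distance $\rho\in(0,1)$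 (i.e. $\Delta(\mathrm{Enc}(\alpha),\mathrm{Enc}(\beta))>\rho$ for $\alpha\ne\beta$), with set of codewords $\mathrm{Enc}(\cdot)$, having a local tester $M$: a probabilistic polynomial-time algorithm making $O(1)$ nonadaptive queries to $f\in\{0,1\}^{\ell(n)}$ that always accepts codewords and rejects every $f$ with probability at least $\kappa\cdot\Delta(f,\mathrm{Enc}(\cdot))$ (for a constant $\kappa>0$); when run on a string over $\{0,1,\bot\}$, $M$ rejects whenever it reads $\bot$. Let $L_{\mathrm{ckt}}(S)=\{\mathrm{Enc}(\alpha)\circ\mathrm{Enc}(\beta) : \alpha=\beta \text{ or } S(\alpha)=\beta \text{ or } S(\beta)=\alpha\}$. Let $V_{\mathrm{ckt}}$ be a smooth PCP-of-proximity verifier for the pair language $\{(S,f\circ g): f\circ g\in L_{\mathrm{ckt}}(S)\}$ with $O(\log n)$ randomness, query complexity $q$, proximity parameter $\rho/4$, soundness error $s_{\mathrm{ckt}}\in(0,1)$, and proof length $p(n)$: on explicit input $S$ it generates a query tuple $I$ into $f\circ g\circ\pi$ and a circuit $D$; if $f\circ g\in L_{\mathrm{ckt}}(S)$ some proof $\pi$ is accepted with probability $1$; if $f\circ g$ is $(\rho/4)$-far from $L_{\mathrm{ckt}}(S)$, every $\pi$ is accepted with probability $<s_{\mathrm{ckt}}$; and every position of $f\circ g\circ\pi$ is queried with the same probability. For $\mathrm{Enc}(\alpha)\circ\mathrm{Enc}(\beta)\in L_{\mathrm{ckt}}(S)$, $\Pi(\alpha,\beta)\in\{0,1\}^{p(n)}$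 is a (polynomial-time computable) proof such that $V_{\mathrm{ckt}}(S)$ accepts $\mathrm{Enc}(\alpha)\circ\mathrm{Enc}(\beta)\circ\Pi(\alpha,\beta)$ with probability $1$. Verifier $V(S)$ with oracle access to $f\circ g\circ\pi\in\{0,1,\bot\}^{\ell(n)}\times\{0,1,\bot\}^{\ell(n)}\times\{0,1,\bot\}^{p(n)}$: (1) run $M$ on $f$ and on $g$; if both runs reject, reject. (2) Pick $i,j\in\{1,\ldots,\ell(n)\}$ independently and uniformly. If $f_i=\bot$ or $g_j=\bot$, accept. (3) Otherwise, run $V_{\mathrm{ckt}}(S)$ to obtain $(I,D)$; if $(f\circ g)|_I$ contains $\bot$, accept; else if $\pi|_I$ contains no $\bot$ and $D((f\circ g\circ\pi)|_I)=1$, accept; otherwise reject. Define $\sigma^{\mathsf{start}}=\mathrm{Enc}(0^n)\circ\mathrm{Enc}(0^n)\circ\Pi(0^n,0^n)$ and $\sigma^{\mathsf{goal}}=\mathrm{Enc}(1^n)\circ\mathrm{Enc}(1^n)\circ\Pi(1^n,1^n)$. A reconfiguration sequence over $\{0,1,\bot\}^N$ from $\sigma^{\mathsf{start}}$ to $\sigma^{\mathsf{goal}}$ is a finite sequence of strings in $\{0,1,\bot\}^N$ starting at $\sigma^{\mathsf{start}}$, ending at $\sigma^{\mathsf{goal}}$, with consecutive strings differing in at most one position. *)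

theory Defs
  imports "HOL-Probability.Probability"
begin

text \<open>Symbols of {0,1,bot} are modelled as bool option; None is bot. A randomized nonadaptive query procedure is a
  pmf over pairs (query tuple, decision predicate on the queried values).\<close>

type_synonym qproc = "(nat list \<times> (bool list \<Rightarrow> bool)) pmf"

definition rel_dist :: "'a list \<Rightarrow> 'a list \<Rightarrow> real" where
  "rel_dist f g = real (card {i. i < length f \<and> f ! i \<noteq> g ! i}) / real (length f)"

definition dist_to :: "'a list \<Rightarrow> 'a list set \<Rightarrow> real" where
  "dist_to f A = (INF g\<in>A. rel_dist f g)"

definition codewords :: "nat \<Rightarrow> (bool list \<Rightarrow> bool list) \<Rightarrow> bool list set" where
  "codewords n Enc = Enc ` {a. length a = n}"

definition is_code :: "nat \<Rightarrow> nat \<Rightarrow> real \<Rightarrow> (bool list \<Rightarrow> bool list) \<Rightarrow> bool" where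
  "is_code n l \<rho> Enc \<longleftrightarrow>
     (\<forall>a. length a = n \<longrightarrow> length (Enc a) = l) \<and>
     (\<forall>a b. length a = n \<longrightarrow> length b = n \<longrightarrow> a \<noteq> b \<longrightarrow> rel_dist (Enc a) (Enc b) > \<rho>)"

definition run_test :: "bool option list \<Rightarrow> nat list \<times> (bool list \<Rightarrow> bool) \<Rightarrow> bool" where
  "run_test x qd = (case qd of (Q, d) \<Rightarrow>
      (\<forall>k\<in>set Q. x ! k \<noteq> None) \<and> d (map (\<lambda>k. the (x ! k)) Q))"

definition is_local_tester ::
  "nat \<Rightarrow> nat \<Rightarrow> (bool list \<Rightarrow> bool list) \<Rightarrow> real \<Rightarrow> qproc \<Rightarrow> bool" where
  "is_local_tester n l Enc \<kappa> M \<longleftrightarrow>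
     (\<forall>qd\<in>set_pmf M. set (fst qd) \<subseteq> {..<l}) \<and>
     (\<forall>a. length a = n \<longrightarrow> measure_pmf.prob M {qd. run_test (map Some (Enc a)) qd} = 1) \<and>
     (\<forall>f. length f = l \<longrightarrow>
        1 - measure_pmf.prob M {qd. run_test (map Some f) qd} \<ge> \<kappa> * dist_to f (codewords n Enc))"

definition ckt_step :: "(bool list \<Rightarrow> bool list) \<Rightarrow> bool list \<Rightarrow> bool list \<Rightarrow> bool" where
  "ckt_step S a b \<longleftrightarrow> a = b \<or> S a = b \<or> S b = a"

definition L_ckt :: "nat \<Rightarrow> (bool list \<Rightarrow> bool list) \<Rightarrow> (bool list \<Rightarrow> bool list) \<Rightarrow> bool list set" where
  "L_ckt n Enc S = {Enc a @ Enc b | a b. length a = n \<and> length b = n \<and> ckt_step S a b}"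

definition run_pcpp :: "bool list \<Rightarrow> nat list \<times> (bool list \<Rightarrow> bool) \<Rightarrow> bool" where
  "run_pcpp x c = (case c of (I, D) \<Rightarrow> D (map (\<lambda>k. x ! k) I))"

definition is_pcpp ::
  "nat \<Rightarrow> nat \<Rightarrow> nat \<Rightarrow> nat \<Rightarrow> real \<Rightarrow> real \<Rightarrow> (bool list \<Rightarrow> bool list) \<Rightarrow>
   (bool list \<Rightarrow> bool list) \<Rightarrow> qproc \<Rightarrow> bool" where
  "is_pcpp n l p q \<rho> s Enc S Vckt \<longleftrightarrow>
     (\<forall>c\<in>set_pmf Vckt. set (fst c) \<subseteq> {..<2*l+p} \<and> length (fst c) \<le> q) \<and>
     (\<forall>w\<in>L_ckt n Enc S. \<exists>\<pi>. length \<pi> = p \<and>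
         measure_pmf.prob Vckt {c. run_pcpp (w @ \<pi>) c} = 1) \<and>
     (\<forall>w \<pi>. length w = 2*l \<longrightarrow> length \<pi> = p \<longrightarrow> dist_to w (L_ckt n Enc S) > \<rho>/4 \<longrightarrow>
         measure_pmf.prob Vckt {c. run_pcpp (w @ \<pi>) c} < s) \<and>
     (\<forall>k k'. k < 2*l+p \<longrightarrow> k' < 2*l+p \<longrightarrow>
         measure_pmf.prob Vckt {c. k \<in> set (fst c)} = measure_pmf.prob Vckt {c. k' \<in> set (fst c)})"

text \<open>Decision of V on x = f o g o pi given all random choices.\<close>
definition V_decide ::
  "nat \<Rightarrow> bool option list \<Rightarrow> nat list \<times> (bool list \<Rightarrow> bool) \<Rightarrow> nat list \<times> (bool list \<Rightarrow> bool)
   \<Rightarrow> nat \<Rightarrow> nat \<Rightarrow> nat list \<times> (bool list \<Rightarrow> bool) \<Rightarrow> bool" where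
  "V_decide l x qf qg i j c =
    (let f = take l x; g = take l (drop l x) in
     if \<not> run_test f qf \<and> \<not> run_test g qg then False
     else if f ! i = None \<or> g ! j = None then True
     else (case c of (I, D) \<Rightarrow>
       if (\<exists>k\<in>set I. k < 2*l \<and> x ! k = None) then True
       else (\<forall>k\<in>set I. x ! k \<noteq> None) \<and> D (map (\<lambda>k. the (x ! k)) I)))"

definition V_run :: "nat \<Rightarrow> qproc \<Rightarrow> qproc \<Rightarrow> bool option list \<Rightarrow> bool pmf" where
  "V_run l M Vckt x =
     bind_pmf M (\<lambda>qf. bind_pmf M (\<lambda>qg.
     bind_pmf (pmf_of_set {..<l}) (\<lambda>i. bind_pmf (pmf_of_set {..<l}) (\<lambda>j.
     bind_pmf Vckt (\<lambda>c. return_pmf (V_decide l x qf qg i j c))))))"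

definition SGR_yes :: "nat \<Rightarrow> (bool list \<Rightarrow> bool list) \<Rightarrow> bool" where
  "SGR_yes n S \<longleftrightarrow> (\<exists>as. as \<noteq> [] \<and> hd as = replicate n False \<and> last as = replicate n True \<and>
      (\<forall>a\<in>set as. length a = n) \<and>
      (\<forall>t. Suc t < length as \<longrightarrow> ckt_step S (as ! t) (as ! Suc t)))"

definition reconf_seq :: "nat \<Rightarrow> 'a list \<Rightarrow> 'a list \<Rightarrow> 'a list list \<Rightarrow> bool" where
  "reconf_seq N s t \<sigma> \<longleftrightarrow> \<sigma> \<noteq> [] \<and> hd \<sigma> = s \<and> last \<sigma> = t \<and> (\<forall>x\<in>set \<sigma>. length x = N) \<and>
     (\<forall>i. Suc i < length \<sigma> \<longrightarrow> card {k. k < N \<and> \<sigma> ! i ! k \<noteq> \<sigma> ! Suc i ! k} \<le> 1)"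

end

theory Submission
  imports Defs
begin

(*
  Follow a path 0^n = a_1, ..., a_T = 1^n of the succinct graph. An edge a -- b is crossed in six
  phases, each of which changes one block symbol by symbol (B = bot^l):

    Enc a Enc a Pi(a,a) -> Enc a B Pi(a,a) -> Enc a B Pi(a,b) -> Enc a Enc b Pi(a,b)
      -> B Enc b Pi(a,b) -> B Enc b Pi(b,b) -> Enc b Enc b Pi(b,b).

  One half always holds an intact codeword, so the tester never rejects both halves. While the
  proof block changes, the other half is entirely bot, so step (2) accepts. Otherwise the string
  arises from a word that V_ckt accepts with certainty by erasing symbols of f o g only, so step (3)
  either reads a bot in f o g or reads exactly the bits of that word.
*)

definition differ_in_at_most_one :: "nat \<Rightarrow> 'a list \<Rightarrow> 'a list \<Rightarrow> bool" where
  "differ_in_at_most_one N x y \<longleftrightarrow> card {k. k < N \<and> x ! k \<noteq> y ! k} \<le> 1"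

lemma reconf_seq_iff_successively:
  "reconf_seq N s t \<sigma> \<longleftrightarrow> \<sigma> \<noteq> [] \<and> hd \<sigma> = s \<and> last \<sigma> = t \<and> (\<forall>x\<in>set \<sigma>. length x = N) \<and>
     successively (differ_in_at_most_one N) \<sigma>"
  unfolding reconf_seq_def successively_conv_nth differ_in_at_most_one_def by blast

definition reconf_within :: "nat \<Rightarrow> ('a list \<Rightarrow> bool) \<Rightarrow> 'a list \<Rightarrow> 'a list \<Rightarrow> bool" where
  "reconf_within N P x y \<longleftrightarrow> (\<exists>\<sigma>. reconf_seq N x y \<sigma> \<and> (\<forall>z\<in>set \<sigma>. P z))"

lemma reconf_within_trans [trans]:
  assumes "reconf_within N P x y" "reconf_within N P y z"
  shows "reconf_within N P x z"
proof -
  obtain \<sigma> \<tau> where "reconf_seq N x y \<sigma>" "\<forall>z\<in>set \<sigma>. P z" "reconf_seq N y z \<tau>" "\<forall>z\<in>set \<tau>. P z"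
    using assms unfolding reconf_within_def by blast
  moreover have "differ_in_at_most_one N y y"
    by (simp add: differ_in_at_most_one_def)
  ultimately have "reconf_seq N x z (\<sigma> @ \<tau>) \<and> (\<forall>z\<in>set (\<sigma> @ \<tau>). P z)"
    unfolding reconf_seq_iff_successively by (auto simp: successively_append_iff)
  then show ?thesis
    unfolding reconf_within_def by blast
qed

lemma reconf_within_sym:
  assumes "reconf_within N P x y"
  shows "reconf_within N P y x"
proof -
  obtain \<sigma> where \<sigma>: "reconf_seq N x y \<sigma>" "\<forall>z\<in>set \<sigma>. P z"
    using assms unfolding reconf_within_def by blast
  have "differ_in_at_most_one N a b = differ_in_at_most_one N b a" for a b :: "'a list"
    unfolding differ_in_at_most_one_def by (simp add: eq_commute)
  then have "reconf_seq N y x (rev \<sigma>)"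
    using \<sigma>(1) unfolding reconf_seq_iff_successively by (simp add: hd_rev last_rev)
  then show ?thesis
    using \<sigma>(2) unfolding reconf_within_def by (metis set_rev)
qed

lemma reconf_within_successively:
  assumes "successively R as" "as \<noteq> []" "reflp R"
    and "\<And>a b. a \<in> set as \<Longrightarrow> b \<in> set as \<Longrightarrow> R a b \<Longrightarrow> reconf_within N P (F a) (F b)"
  shows "reconf_within N P (F (hd as)) (F (last as))"
  using assms
proof (induction as)
  case Nil
  then show ?case by simp
next
  case (Cons a as)
  show ?case
  proof (cases "as = []")
    case True
    then show ?thesis
      using Cons.prems(3,4) by (simp add: reflpD)
  next
    case False
    then have "reconf_within N P (F a) (F (hd as))"
      using Cons.prems(1,4) by (cases as) auto
    moreover have "reconf_within N P (F (hd as)) (F (last as))"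
      using Cons False by (auto simp: successively_Cons)
    ultimately show ?thesis
      using False by (auto intro: reconf_within_trans)
  qed
qed

lemma reconf_within_box:
  assumes x: "list_all2 (\<in>) x Bs" and y: "list_all2 (\<in>) y Bs"
    and P: "\<And>z. list_all2 (\<in>) z Bs \<Longrightarrow> P z"
  shows "reconf_within (length Bs) P x y"
proof -
  define N where "N = length Bs"
  define mix where "mix m = take m y @ drop m x" for m
  define \<sigma> where "\<sigma> = map mix [0..<Suc N]"
  have len: "length x = N" "length y = N"
    using x y by (simp_all add: N_def list_all2_lengthD)
  have mix_nth: "mix m ! k = (if k < m then y ! k else x ! k)" if "m \<le> N" "k < N" for m k
    using that len by (simp add: mix_def nth_append)
  have mix_box: "list_all2 (\<in>) (mix m) Bs" for m
  proof -
    have "list_all2 (\<in>) (take m y @ drop m x) (take m Bs @ drop m Bs)"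
      using x y by (intro list_all2_appendI) simp_all
    then show ?thesis by (simp add: mix_def)
  qed
  have "differ_in_at_most_one N (mix m) (mix (Suc m))" if "m < N" for m
  proof -
    have "{k. k < N \<and> mix m ! k \<noteq> mix (Suc m) ! k} \<subseteq> {m}"
      using that by (auto simp: mix_nth split: if_splits)
    then have "card {k. k < N \<and> mix m ! k \<noteq> mix (Suc m) ! k} \<le> card {m}"
      by (intro card_mono) auto
    then show ?thesis
      by (simp add: differ_in_at_most_one_def)
  qed
  then have "successively (differ_in_at_most_one N) \<sigma>"
    by (auto simp: \<sigma>_def successively_conv_nth simp del: upt_Suc)
  moreover have "mix 0 = x" "mix N = y"
    using len by (simp_all add: mix_def)
  moreover have "\<forall>z\<in>set \<sigma>. length z = N \<and> P z"
    using mix_box P by (auto simp: \<sigma>_def N_def dest: list_all2_lengthD)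
  ultimately have "reconf_seq N x y \<sigma> \<and> (\<forall>z\<in>set \<sigma>. P z)"
    unfolding reconf_seq_iff_successively by (simp add: \<sigma>_def hd_map last_map del: upt_Suc)
  then show ?thesis
    unfolding reconf_within_def N_def by blast
qed

definition erasure_of :: "'a option list \<Rightarrow> 'a list \<Rightarrow> bool" where
  "erasure_of z w \<longleftrightarrow> list_all2 (\<lambda>v b. v = None \<or> v = Some b) z w"

lemma erasure_of_map_Some: "erasure_of (map Some w) w"
  by (simp add: erasure_of_def list_all2_map1 list_all2_refl)

lemma erasure_of_replicate_None: "erasure_of (replicate (length w) None) w"
  by (simp add: erasure_of_def list_all2_conv_all_nth)

lemma list_all2_mem_singletons: "list_all2 (\<in>) z (map (\<lambda>a. {a}) x) \<longleftrightarrow> z = x"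
  by (simp add: list_all2_map2 list_all2_eq)

lemma reconf_within_erase_block:
  assumes "\<And>zv. erasure_of zv v \<Longrightarrow> P (x @ zv @ y)"
  shows "reconf_within (length x + length v + length y) P
           (x @ map Some v @ y) (x @ replicate (length v) None @ y)"
proof -
  define Bs where "Bs = map (\<lambda>a. {a}) x @ map (\<lambda>b. {None, Some b}) v @ map (\<lambda>a. {a}) y"
  have erasable: "list_all2 (\<in>) zv (map (\<lambda>b. {None, Some b}) v) \<longleftrightarrow> erasure_of zv v" for zv
    by (auto simp: erasure_of_def list_all2_map2 elim!: list_all2_mono)
  have "reconf_within (length Bs) P (x @ map Some v @ y) (x @ replicate (length v) None @ y)"
  proof (rule reconf_within_box)
    show "list_all2 (\<in>) (x @ map Some v @ y) Bs" "list_all2 (\<in>) (x @ replicate (length v) None @ y) Bs"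
      unfolding Bs_def using erasure_of_map_Some erasure_of_replicate_None
      by (auto intro!: list_all2_appendI simp: list_all2_mem_singletons erasable)
    show "P z" if "list_all2 (\<in>) z Bs" for z
      using that assms unfolding Bs_def
      by (auto simp: list_all2_append2 list_all2_mem_singletons erasable)
  qed
  then show ?thesis
    by (simp add: Bs_def add.assoc)
qed

lemma reconf_within_rewrite_block:
  assumes "length y' = length y" "\<And>z. length z = length y \<Longrightarrow> P (x @ z)"
  shows "reconf_within (length x + length y) P (x @ y) (x @ y')"
proof -
  define Bs where "Bs = map (\<lambda>a. {a}) x @ replicate (length y) UNIV"
  have "reconf_within (length Bs) P (x @ y) (x @ y')"
  proof (rule reconf_within_box)
    show "list_all2 (\<in>) (x @ y) Bs" "list_all2 (\<in>) (x @ y') Bs"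
      unfolding Bs_def using assms(1)
      by (auto intro!: list_all2_appendI simp: list_all2_mem_singletons simp del: list_all2_append)
        (simp_all add: list_all2_conv_all_nth)
    show "P z" if "list_all2 (\<in>) z Bs" for z
      using that assms(2) unfolding Bs_def
      by (auto simp: list_all2_append2 list_all2_mem_singletons dest: list_all2_lengthD)
  qed
  then show ?thesis
    by (simp add: Bs_def)
qed

locale composed_verifier =
  fixes l p :: nat and M Vckt :: qproc
  assumes half_length_pos: "0 < l"
      \<comment> \<open>V_run samples from pmf_of_set {..<l}, which is junk for l = 0\<close>
    and Vckt_queries: "c \<in> set_pmf Vckt \<Longrightarrow> set (fst c) \<subseteq> {..<2*l+p}"
begin

definition tester_accepts :: "bool option list \<Rightarrow> bool" where
  "tester_accepts x \<longleftrightarrow> (\<forall>qd\<in>set_pmf M. run_test x qd)"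

definition V_accepts :: "bool option list \<Rightarrow> bool" where
  "V_accepts z \<longleftrightarrow> pmf (V_run l M Vckt z) True = 1"

lemma V_acceptsI:
  assumes "\<And>qf qg i j c. qf \<in> set_pmf M \<Longrightarrow> qg \<in> set_pmf M \<Longrightarrow> i < l \<Longrightarrow> j < l \<Longrightarrow>
      c \<in> set_pmf Vckt \<Longrightarrow> V_decide l z qf qg i j c"
  shows "V_accepts z"
proof -
  have "set_pmf (pmf_of_set {..<l}) = {..<l}"
    using half_length_pos by (simp add: lessThan_empty_iff)
  then have "set_pmf (V_run l M Vckt z) \<subseteq> {True}"
    using assms by (auto simp: V_run_def set_bind_pmf)
  then show ?thesis
    by (simp add: V_accepts_def set_pmf_subset_singleton)
qed

lemma V_decide_partial_erasure:
  assumes c: "c \<in> set_pmf Vckt" and "run_pcpp w c"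
    and erased: "\<And>k. k < 2*l+p \<Longrightarrow> z ! k = Some (w ! k) \<or> k < 2*l \<and> z ! k = None"
    and "run_test (take l z) qf \<or> run_test (take l (drop l z)) qg"
  shows "V_decide l z qf qg i j c"
proof -
  obtain I D where cID: "c = (I, D)"
    by (cases c)
  show ?thesis
  proof (cases "\<exists>k\<in>set I. k < 2*l \<and> z ! k = None")
    case False
    have "z ! k = Some (w ! k)" if "k \<in> set I" for k
    proof -
      have "k < 2*l+p"
        using Vckt_queries[OF c] that cID by auto
      then show ?thesis
        using erased False that by blast
    qed
    then have "\<forall>k\<in>set I. z ! k \<noteq> None" and reads_w: "map (\<lambda>k. the (z ! k)) I = map ((!) w) I"
      by simp_all
    then show ?thesis
      using assms(2,4) by (simp add: V_decide_def Let_def cID run_pcpp_def reads_w)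
  qed (use assms(4) in \<open>simp add: V_decide_def Let_def cID\<close>)
qed

lemma V_accepts_partial_erasure:
  assumes "\<forall>c\<in>set_pmf Vckt. run_pcpp (u @ v @ \<pi>) c"
    and "length u = l" "length v = l" "length \<pi> = p"
    and "erasure_of zf u" "erasure_of zg v"
    and "zf = map Some u \<and> tester_accepts zf \<or> zg = map Some v \<and> tester_accepts zg"
  shows "V_accepts (zf @ zg @ map Some \<pi>)"
proof -
  define w where "w = u @ v @ \<pi>"
  define z where "z = zf @ zg @ map Some \<pi>"
  have len: "length zf = l" "length zg = l"
    using assms(2,3,5,6) by (auto simp: erasure_of_def dest: list_all2_lengthD)
  have "erasure_of z w"
    using assms(5,6) erasure_of_map_Some
    unfolding z_def w_def erasure_of_def by (intro list_all2_appendI)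
  then have z_w: "z ! k = None \<or> z ! k = Some (w ! k)" if "k < 2*l+p" for k
    using that assms(2-4) by (simp add: erasure_of_def list_all2_conv_all_nth w_def)
  have proof_part: "z ! k \<noteq> None" if "2*l \<le> k" "k < 2*l+p" for k
    using that len assms(4) by (auto simp: z_def nth_append)
  have erased: "z ! k = Some (w ! k) \<or> k < 2*l \<and> z ! k = None" if "k < 2*l+p" for k
    using z_w[OF that] proof_part[OF _ that] by (cases "k < 2*l") auto
  have "V_decide l z qf qg i j c"
    if "qf \<in> set_pmf M" "qg \<in> set_pmf M" "c \<in> set_pmf Vckt" for qf qg i j c
  proof (rule V_decide_partial_erasure[OF that(3) _ erased])
    show "run_pcpp w c"
      using assms(1) that(3) by (simp add: w_def)
    show "run_test (take l z) qf \<or> run_test (take l (drop l z)) qg"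
      using assms(7) that(1,2) len by (auto simp: z_def tester_accepts_def)
  qed
  then show ?thesis
    unfolding z_def by (intro V_acceptsI)
qed

lemma V_accepts_blank_half:
  assumes "length zf = l" "length zg = l"
    and "tester_accepts zf \<and> zg = replicate l None \<or> zf = replicate l None \<and> tester_accepts zg"
  shows "V_accepts (zf @ zg @ z\<pi>)"
proof (rule V_acceptsI)
  fix qf qg i j c
  assume "qf \<in> set_pmf M" "qg \<in> set_pmf M" "i < l" "j < l"
  then have "run_test zf qf \<or> run_test zg qg" "zf ! i = None \<or> zg ! j = None"
    using assms(3) by (auto simp: tester_accepts_def)
  then show "V_decide l (zf @ zg @ z\<pi>) qf qg i j c"
    using assms(1,2) by (cases c) (simp add: V_decide_def Let_def)
qed

lemma reconf_within_erase_second_half: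
  assumes "length u = l" "length v = l" "length \<pi> = p"
    and "tester_accepts (map Some u)" "\<forall>c\<in>set_pmf Vckt. run_pcpp (u @ v @ \<pi>) c"
  shows "reconf_within (2*l+p) V_accepts
           (map Some (u @ v @ \<pi>)) (map Some u @ replicate l None @ map Some \<pi>)"
proof -
  have "V_accepts (map Some u @ zv @ map Some \<pi>)" if "erasure_of zv v" for zv
    using assms(4) by (intro V_accepts_partial_erasure[OF assms(5,1-3) erasure_of_map_Some that]) simp
  then have "reconf_within (length (map Some u) + length v + length (map Some \<pi>)) V_accepts
      (map Some u @ map Some v @ map Some \<pi>) (map Some u @ replicate (length v) None @ map Some \<pi>)"
    by (rule reconf_within_erase_block)
  then show ?thesis
    using assms(1-3) by (simp add: mult_2)
qed

lemma reconf_within_erase_first_half: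
  assumes "length u = l" "length v = l" "length \<pi> = p"
    and "tester_accepts (map Some v)" "\<forall>c\<in>set_pmf Vckt. run_pcpp (u @ v @ \<pi>) c"
  shows "reconf_within (2*l+p) V_accepts
           (map Some (u @ v @ \<pi>)) (replicate l None @ map Some v @ map Some \<pi>)"
proof -
  have "V_accepts (zu @ map Some v @ map Some \<pi>)" if "erasure_of zu u" for zu
    using assms(4) by (intro V_accepts_partial_erasure[OF assms(5,1-3) that erasure_of_map_Some]) simp
  then have "reconf_within (length u + length (map Some v @ map Some \<pi>)) V_accepts
      (map Some u @ map Some v @ map Some \<pi>) (replicate (length u) None @ map Some v @ map Some \<pi>)"
    by (rule reconf_within_erase_block[where x = "[]", simplified])
  then show ?thesis
    using assms(1-3) by (simp add: mult_2 add.assoc)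
qed

lemma reconf_within_rewrite_proof_second_blank:
  assumes "length u = l" "length \<pi> = p" "length \<pi>' = p" "tester_accepts (map Some u)"
  shows "reconf_within (2*l+p) V_accepts
           (map Some u @ replicate l None @ map Some \<pi>) (map Some u @ replicate l None @ map Some \<pi>')"
proof -
  have "V_accepts (map Some u @ replicate l None @ z)" for z
    by (rule V_accepts_blank_half) (use assms(1,4) in auto)
  then have "reconf_within (length (map Some u @ replicate l None) + length (map Some \<pi>)) V_accepts
      ((map Some u @ replicate l None) @ map Some \<pi>) ((map Some u @ replicate l None) @ map Some \<pi>')"
    by (intro reconf_within_rewrite_block) (simp_all add: assms(2,3))
  then show ?thesis
    using assms(1,2) by (simp add: mult_2)
qed

lemma reconf_within_rewrite_proof_first_blank:
  assumes "length v = l" "length \<pi> = p" "length \<pi>' = p" "tester_accepts (map Some v)"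
  shows "reconf_within (2*l+p) V_accepts
           (replicate l None @ map Some v @ map Some \<pi>) (replicate l None @ map Some v @ map Some \<pi>')"
proof -
  have "V_accepts (replicate l None @ map Some v @ z)" for z
    by (rule V_accepts_blank_half) (use assms(1,4) in auto)
  then have "reconf_within (length (replicate l None @ map Some v) + length (map Some \<pi>)) V_accepts
      ((replicate l None @ map Some v) @ map Some \<pi>) ((replicate l None @ map Some v) @ map Some \<pi>')"
    by (intro reconf_within_rewrite_block) (simp_all add: assms(2,3))
  then show ?thesis
    using assms(1,2) by (simp add: mult_2)
qed

lemma reconf_within_codeword_step:
  assumes len: "length u = l" "length v = l"
      "length \<pi>\<^sub>u\<^sub>u = p" "length \<pi>\<^sub>u\<^sub>v = p" "length \<pi>\<^sub>v\<^sub>v = p"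
    and tested: "tester_accepts (map Some u)" "tester_accepts (map Some v)"
    and uu: "\<forall>c\<in>set_pmf Vckt. run_pcpp (u @ u @ \<pi>\<^sub>u\<^sub>u) c"
    and uv: "\<forall>c\<in>set_pmf Vckt. run_pcpp (u @ v @ \<pi>\<^sub>u\<^sub>v) c"
    and vv: "\<forall>c\<in>set_pmf Vckt. run_pcpp (v @ v @ \<pi>\<^sub>v\<^sub>v) c"
  shows "reconf_within (2*l+p) V_accepts
           (map Some (u @ u @ \<pi>\<^sub>u\<^sub>u)) (map Some (v @ v @ \<pi>\<^sub>v\<^sub>v))"
proof -
  let ?R = "reconf_within (2*l+p) V_accepts"
  have "?R (map Some (u @ u @ \<pi>\<^sub>u\<^sub>u)) (map Some u @ replicate l None @ map Some \<pi>\<^sub>u\<^sub>u)"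
    using len(1,1,3) tested(1) uu by (rule reconf_within_erase_second_half)
  also have "?R \<dots> (map Some u @ replicate l None @ map Some \<pi>\<^sub>u\<^sub>v)"
    using len(1,3,4) tested(1) by (rule reconf_within_rewrite_proof_second_blank)
  also have "?R \<dots> (map Some (u @ v @ \<pi>\<^sub>u\<^sub>v))"
    using reconf_within_erase_second_half[OF len(1,2,4) tested(1) uv] by (rule reconf_within_sym)
  also have "?R \<dots> (replicate l None @ map Some v @ map Some \<pi>\<^sub>u\<^sub>v)"
    using len(1,2,4) tested(2) uv by (rule reconf_within_erase_first_half)
  also have "?R \<dots> (replicate l None @ map Some v @ map Some \<pi>\<^sub>v\<^sub>v)"
    using len(2,4,5) tested(2) by (rule reconf_within_rewrite_proof_first_blank)
  also have "?R \<dots> (map Some (v @ v @ \<pi>\<^sub>v\<^sub>v))"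
    using reconf_within_erase_first_half[OF len(2,2,5) tested(2) vv] by (rule reconf_within_sym)
  finally show ?thesis .
qed

end

lemma prob_eq_1_on_support:
  assumes "measure_pmf.prob P {x. Q x} = 1" "x \<in> set_pmf P"
  shows "Q x"
  using measure_pmf.AE_prob_1[OF assms(1)] assms(2) by (simp add: AE_measure_pmf_iff)

lemma is_code_length_pos:
  assumes "is_code n l \<rho> Enc" "0 < n" "0 \<le> \<rho>"
  shows "0 < l"
proof (rule ccontr)
  \<comment> \<open>for l = 0 all codewords are empty, and rel_dist [] [] = 0 / 0 = 0\<close>
  assume "\<not> 0 < l"
  have "replicate n False \<noteq> replicate n True"
    using assms(2) by (cases n) auto
  then have "\<rho> < rel_dist (Enc (replicate n False)) (Enc (replicate n True))"
    using assms(1) by (simp add: is_code_def)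
  moreover have "Enc (replicate n False) = []"
    using assms(1) \<open>\<not> 0 < l\<close> by (simp add: is_code_def)
  ultimately show False
    using assms(3) by (simp add: rel_dist_def)
qed

theorem mainTheorem3:
  fixes n l p q :: nat and \<rho> \<kappa> s_ckt :: real
    and S Enc :: "bool list \<Rightarrow> bool list"
    and M Vckt :: qproc
    and PiPf :: "bool list \<Rightarrow> bool list \<Rightarrow> bool list"
  assumes "0 < n"
    and "\<forall>a. length a = n \<longrightarrow> length (S a) = n"
    and "S (replicate n True) = replicate n True"
    and "SGR_yes n S"
    and "0 < \<rho>" and "\<rho> < 1" and "is_code n l \<rho> Enc"
    and "0 < \<kappa>" and "is_local_tester n l Enc \<kappa> M"
    and "0 < s_ckt" and "s_ckt < 1" and "is_pcpp n l p q \<rho> s_ckt Enc S Vckt"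
    and "\<forall>a b. length a = n \<longrightarrow> length b = n \<longrightarrow> ckt_step S a b \<longrightarrow>
           length (PiPf a b) = p \<and>
           measure_pmf.prob Vckt {c. run_pcpp (Enc a @ Enc b @ PiPf a b) c} = 1"
  shows "\<exists>\<sigma>. reconf_seq (2*l+p)
            (map Some (Enc (replicate n False) @ Enc (replicate n False) @
                       PiPf (replicate n False) (replicate n False)))
            (map Some (Enc (replicate n True) @ Enc (replicate n True) @
                       PiPf (replicate n True) (replicate n True))) \<sigma> \<and>
          (\<forall>x\<in>set \<sigma>. pmf (V_run l M Vckt x) True = 1)"
proof -
  obtain as where as: "as \<noteq> []" "hd as = replicate n False" "last as = replicate n True"
      "\<forall>a\<in>set as. length a = n" "successively (ckt_step S) as"
    using assms(4) unfolding SGR_yes_def successively_conv_nth by blast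
  have "0 < l"
    using is_code_length_pos assms(1,5,7) by fastforce
  then interpret composed_verifier l p M Vckt
    using assms(12) by unfold_locales (auto simp: is_pcpp_def)
  have Enc: "length (Enc a) = l" "tester_accepts (map Some (Enc a))" if "length a = n" for a
    using that assms(7,9) prob_eq_1_on_support[where Q = "run_test (map Some (Enc a))"]
    by (auto simp: is_code_def is_local_tester_def tester_accepts_def)
  have PiPf: "length (PiPf a b) = p" "\<forall>c\<in>set_pmf Vckt. run_pcpp (Enc a @ Enc b @ PiPf a b) c"
    if "length a = n" "length b = n" "ckt_step S a b" for a b
    using assms(13)[rule_format, OF that]
      prob_eq_1_on_support[where Q = "run_pcpp (Enc a @ Enc b @ PiPf a b)"]
    by auto
  define word where "word a = map Some (Enc a @ Enc a @ PiPf a a)" for a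
  have "reconf_within (2*l+p) V_accepts (word a) (word b)"
    if "length a = n" "length b = n" "ckt_step S a b" for a b
    using that Enc PiPf unfolding word_def
    by (intro reconf_within_codeword_step[where \<pi>\<^sub>u\<^sub>v = "PiPf a b"]) (auto simp: ckt_step_def)
  then have "reconf_within (2*l+p) V_accepts (word (hd as)) (word (last as))"
    using as by (intro reconf_within_successively[where R = "ckt_step S"])
      (auto simp: reflp_def ckt_step_def)
  then show ?thesis
    using as(2,3) unfolding reconf_within_def V_accepts_def word_def by simp
qed

end
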